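(* Let $m\geq3$ be an integer and let $k,j$ be integers with $1\leq k\leq j\leq\frac{m+2}{2}$. Define $$K_{m,j,k}=\int_0^\infty\left(\frac{t^{mk-j}}{(1+t^m)^{k-\frac12}}-t^{\frac m2-j}\right)dt\quad\text{if } j\leq\frac{m+1}{2},\qquad K_{m,j,k}=\int_0^\infty\left(\frac{t^{mk-\frac m2-1}}{(1+t^m)^{k-\frac12}}-\frac{1}{t+1}\right)dt\quad\text{if $m$ is even and } j=\frac{m+2}{2}.$$ Then $$K_{m,j,k}=\begin{cases}-\frac2m&\text{if } j=k=1,\\ -\frac{2k-1}{m+2-2j}B\left(k-\frac{j-1}{m},\frac12+\frac{j-1}{m}\right)&\text{if } 1\leq k\leq j\leq\frac{m+1}{2},\ j\neq1,\\ \frac2m\left(\ln2-\frac11-\frac13-\cdots-\frac1{2k-5}-\frac1{2k-3}\right)&\text{if $m$ is even and } 1\leq k\leq j=\frac{m+2}{2},\end{cases}$$ where $B$ is the beta function and the sum $\frac11+\frac13+\cdots+\frac1{2k-3}$ is empty when $k=1$.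
   Context: $B(z,w)=\int_0^1(1-u)^{z-1}u^{w-1}du=\frac{\Gamma(z)\Gamma(w)}{\Gamma(z+w)}$ is the beta function. *)

theory Defs
  imports "HOL-Analysis.Analysis"
begin

end

theory Submission
  imports Defs "HOL-Real_Asymp.Real_Asymp"
begin

(* Put c = k - 1/2, a = k - (j - 1)/m and d = m (a - c) = m/2 - j + 1, so that the integrand of
   K_{m,j,k} is f(t) = t^(m a - 1) (1 + t^m)^(-c) - t^(d - 1). Then
     G(t) = t f(t)   has   G' = d f + m c t^(m a - 1) (1 + t^m)^(-c-1),
   and for 0 < d < m the function G tends to 0 at both ends of (0, oo). The last integrand becomes
   a Beta integrand under t^m = x / (1 - x) and integrates to B(a, c + 1 - a) / m; hence
   K_{m,j,k} = -(c / d) B(a, c + 1 - a).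
   For 2j = m + 2 we have d = 0, and t^m / (1 + t^m) = 1 - 1 / (1 + t^m) gives instead the
   recurrence K_{m,j,k+1} = K_{m,j,k} - 1 / (m (k - 1/2)), which starts from K_{m,j,1} = (2/m) ln 2,
   read off from the antiderivative (2/m) arsinh (t^(m/2)) - ln (1 + t). *)

section \<open>Improper integrals over the positive half-line\<close>

lemma set_integral_0_infty_FTC:
  fixes f F :: "real \<Rightarrow> real"
  assumes deriv: "\<And>x. x > 0 \<Longrightarrow> (F has_real_derivative f x) (at x)"
    and cont: "\<And>x. x > 0 \<Longrightarrow> isCont f x"
    and int: "set_integrable lborel {0<..} f"
    and lim_0: "(F \<longlongrightarrow> A) (at_right 0)" and lim_infty: "(F \<longlongrightarrow> B) at_top"
  shows "(LINT x:{0<..}|lborel. f x) = B - A"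
proof -
  have "(LBINT x=ereal 0..\<infinity>. f x) = B - A"
  proof (rule interval_integral_FTC_integrable)
    show "(F has_vector_derivative f x) (at x)" if "ereal 0 < ereal x" for x
      using deriv[of x] that by (simp add: has_real_derivative_iff_has_vector_derivative)
    show "set_integrable lborel (einterval (ereal 0) \<infinity>) f"
      using int by simp
    show "((F \<circ> real_of_ereal) \<longlongrightarrow> A) (at_right (ereal 0))"
      using lim_0 by (simp add: ereal_tendsto_simps1)
    show "((F \<circ> real_of_ereal) \<longlongrightarrow> B) (at_left \<infinity>)"
      using lim_infty by (simp add: ereal_tendsto_simps1)
  qed (use cont in auto)
  then show ?thesis
    by (simp add: interval_integral_to_infinity_eq)
qed

lemma set_integral_0_infty_FTC_nonneg:
  fixes f F :: "real \<Rightarrow> real"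
  assumes "\<And>x. x > 0 \<Longrightarrow> (F has_real_derivative f x) (at x)"
    and "\<And>x. x > 0 \<Longrightarrow> isCont f x"
    and "\<And>x. x > 0 \<Longrightarrow> f x \<ge> 0"
    and "(F \<longlongrightarrow> A) (at_right 0)" and "(F \<longlongrightarrow> B) at_top"
  shows "set_integrable lborel {0<..} f"
    and "(LINT x:{0<..}|lborel. f x) = B - A"
proof -
  have "set_integrable lborel (einterval (ereal 0) \<infinity>) f"
    and "(LBINT x=ereal 0..\<infinity>. f x) = B - A"
    using interval_integral_FTC_nonneg[of "ereal 0" \<infinity> F f A B] assms
    by (auto simp: ereal_tendsto_simps1)
  then show "set_integrable lborel {0<..} f" "(LINT x:{0<..}|lborel. f x) = B - A"
    by (simp_all add: interval_integral_to_infinity_eq)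
qed

lemma set_integrable_0_infty_bound:
  fixes f h :: "real \<Rightarrow> real"
  assumes "set_integrable lborel {0<..} h"
    and "\<And>x. x > 0 \<Longrightarrow> isCont f x"
    and "\<And>x. x > 0 \<Longrightarrow> \<bar>f x\<bar> \<le> h x"
  shows "set_integrable lborel {0<..} f"
proof (rule set_integrable_bound[OF assms(1)])
  show "set_borel_measurable lborel {0<..} f"
    unfolding set_borel_measurable_def using assms(2)
    by (auto simp del: real_scaleR_def intro!: borel_measurable_continuous_on_indicator
             simp: continuous_on_eq_continuous_at)
  show "AE x\<in>{0<..} in lborel. norm (f x) \<le> norm (h x)"
    using assms(3) by (intro AE_I2) force
qed

lemma has_integral_set_borel_integral:
  fixes f :: "real \<Rightarrow> real"
  assumes "set_integrable lborel S f"
  shows "(f has_integral (LINT x:S|lborel. f x)) S"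
  using set_borel_integral_eq_integral[OF assms] by (simp add: has_integral_integral)

lemma set_integral_substitution_0_1_onto_0_infty:
  fixes f g g' :: "real \<Rightarrow> real"
  assumes "\<And>x. 0 < x \<Longrightarrow> x < 1 \<Longrightarrow> (g has_real_derivative g' x) (at x)"
    and "\<And>x. 0 < x \<Longrightarrow> x < 1 \<Longrightarrow> isCont g' x"
    and "\<And>x. 0 < x \<Longrightarrow> x < 1 \<Longrightarrow> isCont f (g x)"
    and "\<And>x. 0 < x \<Longrightarrow> x < 1 \<Longrightarrow> 0 \<le> f (g x)"
    and "\<And>x. 0 \<le> x \<Longrightarrow> x \<le> 1 \<Longrightarrow> 0 \<le> g' x"
    and lim_0: "(g \<longlongrightarrow> 0) (at_right 0)"
    and lim_1: "filterlim g at_top (at_left 1)"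
    and "set_integrable lborel {0<..<1} (\<lambda>x. f (g x) * g' x)"
  shows "set_integrable lborel {0<..} f"
    and "(LINT x:{0<..}|lborel. f x) = (LINT x:{0<..<1}|lborel. f (g x) * g' x)"
proof -
  have "((ereal \<circ> g \<circ> real_of_ereal) \<longlongrightarrow> ereal 0) (at_right (ereal 0))"
    using lim_0 by (simp add: ereal_tendsto_simps)
  moreover have "((ereal \<circ> g \<circ> real_of_ereal) \<longlongrightarrow> \<infinity>) (at_left (ereal 1))"
    using lim_1 by (simp add: ereal_tendsto_simps)
  moreover have "einterval (ereal 0) (ereal 1) = {0<..<1}"
    by auto
  ultimately have "set_integrable lborel (einterval (ereal 0) \<infinity>) f"
      and "(LBINT x=ereal 0..\<infinity>. f x) = (LBINT x=ereal 0..ereal 1. f (g x) * g' x)"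
    using interval_integral_substitution_nonneg[of "ereal 0" "ereal 1" g g' f "ereal 0" \<infinity>]
      assms by auto
  then show "set_integrable lborel {0<..} f"
    and "(LINT x:{0<..}|lborel. f x) = (LINT x:{0<..<1}|lborel. f (g x) * g' x)"
    by (simp_all add: interval_lebesgue_integral_le_eq)
qed

section \<open>The Beta function as an integral over the positive half-line\<close>

lemma Beta_right_1:
  fixes x :: real
  assumes "x > 0"
  shows "Beta x 1 = 1 / x"
proof -
  have "Gamma (x + 1) = x * Gamma x"
    using assms by (intro Gamma_plus1) auto
  moreover have "Gamma x \<noteq> 0"
    using Gamma_real_pos[OF assms] by linarith
  ultimately show ?thesis
    using assms by (simp add: Beta_def)
qed

lemma Beta_1_one_half: "Beta 1 (1/2) = (2::real)"
  using Beta_right_1[of "1/2"] by (simp add: Beta_commute)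

lemma set_integral_Beta_0_1:
  fixes a b :: real
  assumes "a > 0" "b > 0"
  shows "set_integrable lborel {0<..<1} (\<lambda>t. t powr (a - 1) * (1 - t) powr (b - 1))"
    and "(LINT t:{0<..<1}|lborel. t powr (a - 1) * (1 - t) powr (b - 1)) = Beta a b"
proof -
  have int: "set_integrable lborel {0..1} (\<lambda>t. t powr (a - 1) * (1 - t) powr (b - 1))"
    using integrable_Beta[OF assms] .
  show "set_integrable lborel {0<..<1} (\<lambda>t. t powr (a - 1) * (1 - t) powr (b - 1))"
    by (rule set_integrable_subset[OF int]) auto
  have "(LBINT t=ereal 0..ereal 1. t powr (a - 1) * (1 - t) powr (b - 1))
          = integral {0..1} (\<lambda>t. t powr (a - 1) * (1 - t) powr (b - 1))"
    using int by (intro interval_integral_eq_integral) auto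
  also have "\<dots> = Beta a b"
    using has_integral_Beta_real[OF assms] by (rule integral_unique)
  finally show "(LINT t:{0<..<1}|lborel. t powr (a - 1) * (1 - t) powr (b - 1)) = Beta a b"
    by (simp add: interval_lebesgue_integral_le_eq)
qed

lemma Beta_substitution_integrand:
  fixes m a b x :: real
  assumes m: "m > 0" and x: "0 < x" "x < 1"
  defines "y \<equiv> x / (1 - x)"
  shows "(y powr (1/m)) powr (m*a - 1) / (1 + (y powr (1/m)) powr m) powr (a + b)
           * ((1/m) * y powr (1/m - 1) / (1 - x)^2)
         = (1/m) * (x powr (a - 1) * (1 - x) powr (b - 1))"
proof -
  have y: "y > 0" using x by (simp add: y_def)
  have num: "(y powr (1/m)) powr (m*a - 1) * y powr (1/m - 1) = y powr (a - 1)"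
  proof -
    have "(y powr (1/m)) powr (m*a - 1) * y powr (1/m - 1) = y powr (1/m * (m*a - 1) + (1/m - 1))"
      by (simp only: powr_powr powr_add)
    also have "1/m * (m*a - 1) + (1/m - 1) = a - 1"
      using m by (simp add: field_simps)
    finally show ?thesis .
  qed
  have den: "1 + (y powr (1/m)) powr m = inverse (1 - x)"
    using m x y by (simp add: powr_powr y_def field_simps)
  have ya: "y powr (a - 1) = x powr (a - 1) * (1 - x) powr (1 - a)"
  proof -
    have "y powr (a - 1) = x powr (a - 1) / (1 - x) powr (a - 1)"
      using x unfolding y_def by (simp add: powr_divide)
    also have "\<dots> = x powr (a - 1) * (1 - x) powr (1 - a)"
      using powr_minus[of "1 - x" "a - 1"] by (simp add: divide_inverse)
    finally show ?thesis .
  qed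
  have pw: "(1 - x) powr (1 - a) * (1 - x) powr (a + b) / (1 - x)^2 = (1 - x) powr (b - 1)"
  proof -
    have "(1 - x) powr (1 - a) * (1 - x) powr (a + b) = (1 - x) powr ((b - 1) + 2)"
      by (simp add: powr_add[symmetric])
    also have "\<dots> = (1 - x) powr (b - 1) * (1 - x)^2"
      using x by (simp only: powr_add powr_numeral)
    finally show ?thesis using x by simp
  qed
  have "(y powr (1/m)) powr (m*a - 1) / (1 + (y powr (1/m)) powr m) powr (a + b)
           * ((1/m) * y powr (1/m - 1) / (1 - x)^2)
        = (1/m) * (((y powr (1/m)) powr (m*a - 1) * y powr (1/m - 1))
                   * ((1 - x) powr (a + b) / (1 - x)^2))"
    unfolding den by (simp add: inverse_powr divide_inverse mult_ac)
  also have "\<dots> = (1/m) * (x powr (a - 1) * ((1 - x) powr (1 - a) * (1 - x) powr (a + b) / (1 - x)^2))"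
    unfolding num ya by (simp add: mult_ac)
  finally show ?thesis
    unfolding pw .
qed

lemma set_integral_Beta_0_infty:
  fixes m a b :: real
  assumes m: "m > 0" and a: "a > 0" and b: "b > 0"
  shows "set_integrable lborel {0<..} (\<lambda>t. t powr (m*a - 1) / (1 + t powr m) powr (a + b))"
    and "(LINT t:{0<..}|lborel. t powr (m*a - 1) / (1 + t powr m) powr (a + b)) = Beta a b / m"
proof -
  define f where "f = (\<lambda>t::real. t powr (m*a - 1) / (1 + t powr m) powr (a + b))"
  define g where "g = (\<lambda>x::real. (x / (1 - x)) powr (1/m))"
  define g' where "g' = (\<lambda>x::real. (1/m) * (x / (1 - x)) powr (1/m - 1) / (1 - x)^2)"
  have fg: "f (g x) * g' x = (1/m) * (x powr (a - 1) * (1 - x) powr (b - 1))"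
    if "0 < x" "x < 1" for x
    using Beta_substitution_integrand[OF m that] unfolding f_def g_def g'_def by simp
  note Beta = set_integral_Beta_0_1[OF a b]
  have int: "set_integrable lborel {0<..<1} (\<lambda>x. f (g x) * g' x)"
    using set_integrable_mult_right[OF Beta(1), of "1/m"]
    by (rule set_integrable_cong[THEN iffD1, rotated 3]) (auto simp: fg)
  have deriv: "(g has_real_derivative g' x) (at x)" if "0 < x" "x < 1" for x
    using that unfolding g_def g'_def
    by (auto intro!: derivative_eq_intros simp: field_simps power2_eq_square)
  have cont_g': "isCont g' x" if "0 < x" "x < 1" for x
    using that m unfolding g'_def by (auto intro!: continuous_intros)
  have cont_f: "isCont f (g x)" if "0 < x" "x < 1" for x
  proof -
    have "g x > 0" "1 + g x powr m > 0"
      using that by (simp_all add: g_def add_pos_nonneg)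
    then show ?thesis
      unfolding f_def by (auto intro!: continuous_intros)
  qed
  have lim_0: "(g \<longlongrightarrow> 0) (at_right 0)"
    unfolding g_def using m
    by (intro tendsto_zero_powrI[where b="1/m"])
       (auto intro!: tendsto_eq_intros eventually_at_rightI[of 0 1])
  have "filterlim (\<lambda>x::real. x / (1 - x)) at_top (at_left 1)"
    by real_asymp
  then have lim_1: "filterlim g at_top (at_left 1)"
    unfolding g_def using m by (intro filterlim_compose[OF real_powr_at_top]) auto
  have f_nonneg: "0 \<le> f (g x)" for x
    by (simp add: f_def)
  have g'_nonneg: "0 \<le> g' x" if "0 \<le> x" "x \<le> 1" for x
    using that m by (simp add: g'_def)
  note subst = set_integral_substitution_0_1_onto_0_infty[of g g' f,
      OF deriv cont_g' cont_f f_nonneg g'_nonneg lim_0 lim_1 int]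
  have "(LINT x:{0<..<1}|lborel. f (g x) * g' x)
          = (LINT x:{0<..<1}|lborel. (1/m) * (x powr (a - 1) * (1 - x) powr (b - 1)))"
    by (rule set_lebesgue_integral_cong) (auto simp: fg)
  also have "\<dots> = Beta a b / m"
    using Beta(2) by simp
  finally show "set_integrable lborel {0<..} (\<lambda>t. t powr (m*a - 1) / (1 + t powr m) powr (a + b))"
    and "(LINT t:{0<..}|lborel. t powr (m*a - 1) / (1 + t powr m) powr (a + b)) = Beta a b / m"
    using subst unfolding f_def by simp_all
qed

section \<open>The case \<open>2j \<le> m + 1\<close>\<close>

lemma has_real_derivative_powr_ratio_minus_powr:
  fixes m a c t :: real
  assumes t: "t > 0"
  shows "((\<lambda>t. t powr (m*a) / (1 + t powr m) powr c - t powr (m*(a-c))) has_real_derivative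
           m*(a-c) * (t powr (m*a - 1) / (1 + t powr m) powr c - t powr (m*(a-c) - 1))
           + m*c * (t powr (m*a - 1) / (1 + t powr m) powr (c + 1))) (at t)"
proof -
  define Y where "Y = 1 + t powr m"
  have Y: "Y > 0"
    by (simp add: Y_def add_pos_nonneg)
  have denom: "((\<lambda>t. (1 + t powr m) powr (-c)) has_real_derivative
                 -c * Y powr (-c - 1) * (m * t powr (m - 1))) (at t)"
  proof (rule DERIV_chain2[of "\<lambda>y. y powr (-c)"])
    show "((\<lambda>y. y powr (-c)) has_real_derivative -c * Y powr (-c - 1)) (at (1 + t powr m))"
      using has_real_derivative_powr[OF Y, of "-c"] by (simp add: Y_def)
    show "((\<lambda>t. 1 + t powr m) has_real_derivative m * t powr (m - 1)) (at t)"
      using DERIV_add[OF DERIV_const has_real_derivative_powr[OF t, of m]] by simp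
  qed
  have "((\<lambda>t. t powr (m*a) * (1 + t powr m) powr (-c) - t powr (m*(a-c))) has_real_derivative
          m*a * t powr (m*a - 1) * Y powr (-c) + -c * Y powr (-c - 1) * (m * t powr (m - 1)) * t powr (m*a)
          - m*(a-c) * t powr (m*(a-c) - 1)) (at t)"
    unfolding Y_def
    by (intro DERIV_diff DERIV_mult denom[unfolded Y_def] has_real_derivative_powr[OF t])
  moreover have "m*a * t powr (m*a - 1) * Y powr (-c) + -c * Y powr (-c - 1) * (m * t powr (m - 1)) * t powr (m*a)
          - m*(a-c) * t powr (m*(a-c) - 1)
        = m*(a-c) * (t powr (m*a - 1) * Y powr (-c) - t powr (m*(a-c) - 1))
          + m*c * (t powr (m*a - 1) * Y powr (-c - 1))"
  proof -
    have tm: "t powr (m - 1) * t powr (m*a) = t powr (m*a - 1) * (Y - 1)"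
      using t by (simp add: Y_def powr_add[symmetric] algebra_simps)
    have Yc: "Y powr (-c - 1) * Y = Y powr (-c)"
      using Y powr_add[of Y "-c - 1" 1] by simp
    have "-c * Y powr (-c - 1) * (m * t powr (m - 1)) * t powr (m*a)
          = -c*m * Y powr (-c - 1) * (t powr (m - 1) * t powr (m*a))"
      by (simp add: mult_ac)
    also have "\<dots> = -c*m * (t powr (m*a - 1) * (Y powr (-c - 1) * Y)) + c*m * (t powr (m*a - 1) * Y powr (-c - 1))"
      unfolding tm by (simp add: algebra_simps)
    finally show ?thesis
      unfolding Yc by (simp add: algebra_simps)
  qed
  ultimately have "((\<lambda>t. t powr (m*a) * (1 + t powr m) powr (-c) - t powr (m*(a-c))) has_real_derivative
          m*(a-c) * (t powr (m*a - 1) * Y powr (-c) - t powr (m*(a-c) - 1))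
          + m*c * (t powr (m*a - 1) * Y powr (-c - 1))) (at t)"
    by simp
  moreover have "Y powr (-c - 1) = inverse (Y powr (c + 1))"
    using powr_minus[of Y "c + 1"] by simp
  ultimately show ?thesis
    unfolding Y_def by (simp add: powr_minus divide_inverse)
qed

lemma one_minus_powr_le:
  fixes s c :: real and n :: nat
  assumes s: "0 < s" "s < 1" and c: "0 \<le> c" "c \<le> real n"
  shows "1 - s powr c \<le> n * (1 - s)"
proof -
  have "s powr real n \<le> s powr c"
    using s c by (intro powr_mono') auto
  then have "s ^ n \<le> s powr c"
    using s by (simp add: powr_realpow)
  moreover have "1 - n * (1 - s) \<le> s ^ n"
    using Bernoulli_inequality[of "-(1 - s)" n] s by (simp add: algebra_simps)
  ultimately show ?thesis
    by simp
qed

lemma abs_powr_ratio_minus_powr_le: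
  fixes m c p t :: real and n :: nat
  assumes t: "t > 0" and c: "0 \<le> c" "c \<le> real n"
  shows "\<bar>t powr (p + m*c) / (1 + t powr m) powr c - t powr p\<bar> \<le> n * (t powr p / (1 + t powr m))"
proof -
  define s where "s = t powr m / (1 + t powr m)"
  have Y: "1 + t powr m > 0"
    by (simp add: add_pos_nonneg)
  have s: "0 < s" "s < 1" "1 - s = 1 / (1 + t powr m)"
    using t Y by (simp_all add: s_def field_simps)
  have "t powr (p + m*c) = t powr p * (t powr m) powr c"
    by (simp add: powr_add powr_powr)
  then have "t powr (p + m*c) / (1 + t powr m) powr c - t powr p = - (t powr p * (1 - s powr c))"
    using Y by (simp add: s_def powr_divide algebra_simps)
  moreover have "s powr c \<le> 1"
    using s c by (simp add: powr_le1)
  ultimately have "\<bar>t powr (p + m*c) / (1 + t powr m) powr c - t powr p\<bar> = t powr p * (1 - s powr c)"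
    by (simp add: abs_mult)
  also have "\<dots> \<le> t powr p * (n * (1 - s))"
    using one_minus_powr_le[OF s(1,2) c] by (intro mult_left_mono) auto
  finally show ?thesis
    using s(3) by (simp add: mult.commute)
qed

lemma tendsto_0_powr_ratio_minus_powr:
  fixes m a c :: real
  assumes m: "m > 0" and c: "0 \<le> c" and a: "c < a" "a < c + 1"
  defines "G \<equiv> \<lambda>t. t powr (m*a) / (1 + t powr m) powr c - t powr (m*(a-c))"
  shows "(G \<longlongrightarrow> 0) (at_right 0)" and "(G \<longlongrightarrow> 0) at_top"
proof -
  obtain n :: nat where n: "c \<le> real n"
    using real_arch_simple by blast
  define d where "d = m*(a-c)"
  have d: "0 < d" "d < m"
    using m a by (simp_all add: d_def)
  have "d + m*c = m*a"
    by (simp add: d_def algebra_simps)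
  then have bound: "norm (G t) \<le> n * (t powr d / (1 + t powr m))" if "t > 0" for t
    using abs_powr_ratio_minus_powr_le[OF that c n, of d m] by (simp add: G_def d_def)
  show "(G \<longlongrightarrow> 0) (at_right 0)"
  proof (rule Lim_null_comparison)
    show "\<forall>\<^sub>F t in at_right 0. norm (G t) \<le> n * t powr d"
    proof (rule eventually_at_rightI[of 0 1])
      fix t :: real assume "t \<in> {0<..<1}"
      then have "t > 0" by simp
      then have "t powr d / (1 + t powr m) \<le> t powr d"
        by (simp add: divide_le_eq mult_le_cancel_left1 add_pos_nonneg)
      then show "norm (G t) \<le> n * t powr d"
        using bound[OF \<open>t > 0\<close>] by (meson mult_left_mono of_nat_0_le_iff order_trans)
    qed simp
    show "((\<lambda>t. n * t powr d) \<longlongrightarrow> 0) (at_right 0)"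
      using d by (auto intro!: tendsto_mult_right_zero tendsto_zero_powrI[where b=d]
                         tendsto_eq_intros eventually_at_rightI[of 0 1])
  qed
  show "(G \<longlongrightarrow> 0) at_top"
  proof (rule Lim_null_comparison)
    show "\<forall>\<^sub>F t in at_top. norm (G t) \<le> n * t powr (d - m)"
    proof (rule eventually_at_top_linorderI[of 1])
      fix t :: real assume "1 \<le> t"
      then have "0 < t powr m"
        by simp
      then have "t powr d / (1 + t powr m) \<le> t powr d / t powr m"
        by (intro divide_left_mono mult_pos_pos) (auto simp: add_pos_nonneg)
      from mult_left_mono[OF this, of "real n"]
      have "n * (t powr d / (1 + t powr m)) \<le> n * t powr (d - m)"
        by (simp add: powr_diff)
      then show "norm (G t) \<le> n * t powr (d - m)"
        using bound[of t] \<open>1 \<le> t\<close> by simp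
    qed
    show "((\<lambda>t. n * t powr (d - m)) \<longlongrightarrow> 0) at_top"
      using d by (intro tendsto_mult_right_zero tendsto_neg_powr filterlim_ident) auto
  qed
qed

lemma set_integral_powr_ratio_minus_powr:
  fixes m a c :: real
  assumes m: "m > 0" and c: "0 \<le> c" and a: "c < a" "a < c + 1"
  defines "f \<equiv> \<lambda>t. t powr (m*a - 1) / (1 + t powr m) powr c - t powr (m*(a-c) - 1)"
  shows "set_integrable lborel {0<..} f"
    and "(LINT t:{0<..}|lborel. f t) = - c / (m*(a-c)) * Beta a (c + 1 - a)"
proof -
  obtain n :: nat where n: "c \<le> real n"
    using real_arch_simple by blast
  define d where "d = m*(a-c)"
  have d: "0 < d" "d < m"
    using m a by (simp_all add: d_def)
  define g where "g = (\<lambda>t::real. t powr (m*a - 1) / (1 + t powr m) powr (c + 1))"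
  have Y: "1 + t powr m > 0" for t :: real
    by (simp add: add_pos_nonneg)
  have g: "set_integrable lborel {0<..} g" "(LINT t:{0<..}|lborel. g t) = Beta a (c + 1 - a) / m"
    using set_integral_Beta_0_infty[OF m, of a "c + 1 - a"] a c by (simp_all add: g_def)
  have "set_integrable lborel {0<..} (\<lambda>t. t powr (m * (d/m) - 1) / (1 + t powr m) powr (d/m + (1 - d/m)))"
    using set_integral_Beta_0_infty(1)[OF m, of "d/m" "1 - d/m"] m d by simp
  then have "set_integrable lborel {0<..} (\<lambda>t. n * (t powr (d - 1) / (1 + t powr m)))"
    using m by (intro set_integrable_mult_right) simp
  then show f: "set_integrable lborel {0<..} f"
  proof (rule set_integrable_0_infty_bound)
    show "isCont f t" if "t > 0" for t
      using that Y[of t] unfolding f_def by (auto intro!: continuous_intros)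
    have exp: "d - 1 + m*c = m*a - 1"
      by (simp add: d_def algebra_simps)
    show "\<bar>f t\<bar> \<le> n * (t powr (d - 1) / (1 + t powr m))" if "t > 0" for t
      using abs_powr_ratio_minus_powr_le[OF that c n, of "d - 1" m]
      unfolding exp unfolding f_def d_def .
  qed
  have deriv: "((\<lambda>t. t powr (m*a) / (1 + t powr m) powr c - t powr (m*(a-c)))
                  has_real_derivative d * f t + m*c * g t) (at t)" if "t > 0" for t
    using has_real_derivative_powr_ratio_minus_powr[OF that, of m a c]
    unfolding f_def g_def d_def .
  have "(LINT t:{0<..}|lborel. d * f t + m*c * g t) = 0 - 0"
  proof (rule set_integral_0_infty_FTC[OF deriv])
    show "isCont (\<lambda>t. d * f t + m*c * g t) t" if "t > 0" for t
      using that Y[of t] unfolding f_def g_def by (auto intro!: continuous_intros)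
    show "set_integrable lborel {0<..} (\<lambda>t. d * f t + m*c * g t)"
      using f g(1) by (intro set_integral_add set_integrable_mult_right)
  qed (use tendsto_0_powr_ratio_minus_powr[OF m c a] in auto)
  moreover have "(LINT t:{0<..}|lborel. d * f t + m*c * g t)
                   = d * (LINT t:{0<..}|lborel. f t) + m*c * (LINT t:{0<..}|lborel. g t)"
    using f g(1) by simp
  ultimately have "d * (LINT t:{0<..}|lborel. f t) + c * Beta a (c + 1 - a) = 0"
    using g(2) m by simp
  then show "(LINT t:{0<..}|lborel. f t) = - c / (m*(a-c)) * Beta a (c + 1 - a)"
    unfolding d_def[symmetric] using d by (simp add: field_simps)
qed

section \<open>The case \<open>2j = m + 2\<close>\<close>

lemma tendsto_arsinh_power_minus_ln_1_plus_power:
  fixes n :: nat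
  assumes "n \<ge> 1"
  shows "((\<lambda>t::real. arsinh (t^n) - ln (1 + t^n)) \<longlongrightarrow> ln 2) at_top"
proof -
  have "((\<lambda>u::real. arsinh u - ln (1 + u)) \<longlongrightarrow> ln 2) at_top"
    unfolding arsinh_real_def by real_asymp
  moreover have "filterlim (\<lambda>t::real. t^n) at_top at_top"
    using assms by (intro filterlim_pow_at_top filterlim_ident) auto
  ultimately show ?thesis
    by (rule filterlim_compose)
qed

lemma set_integral_power_div_sqrt_minus_power_div:
  fixes n :: nat
  assumes n: "n \<ge> 1"
  defines "P \<equiv> \<lambda>t::real. t^(n-1) / sqrt (1 + t^(2*n)) - t^(n-1) / (1 + t^n)"
  shows "set_integrable lborel {0<..} P" and "(LINT t:{0<..}|lborel. P t) = ln 2 / n"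
proof -
  define F where "F = (\<lambda>t::real. (arsinh (t^n) - ln (1 + t^n)) / n)"
  have Y: "1 + t^n > 0" "sqrt (1 + t^(2*n)) > 0" if "t > 0" for t :: real
    using that by (simp_all add: add_pos_nonneg)
  have sq: "(t^n)^2 + 1 = 1 + t^(2*n)" for t :: real
    by (simp add: power_mult[symmetric] mult.commute)
  have deriv: "(F has_real_derivative P t) (at t)" if "t > 0" for t
  proof -
    have "((\<lambda>t. arsinh (t^n)) has_real_derivative 1 / sqrt (1 + t^(2*n)) * (n * t^(n-1))) (at t)"
      using DERIV_chain2[OF arsinh_real_has_field_derivative, of "\<lambda>t. t^n"]
      by (auto intro!: derivative_eq_intros simp: sq)
    moreover have "((\<lambda>t. ln (1 + t^n)) has_real_derivative n * t^(n-1) / (1 + t^n)) (at t)"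
      using Y[OF that] by (auto intro!: derivative_eq_intros)
    ultimately have "(F has_real_derivative
        (1 / sqrt (1 + t^(2*n)) * (n * t^(n-1)) - n * t^(n-1) / (1 + t^n)) / n) (at t)"
      unfolding F_def by (intro DERIV_cdivide DERIV_diff)
    then show ?thesis
      by (rule DERIV_cong) (use n in \<open>simp add: P_def diff_divide_distrib\<close>)
  qed
  have cont: "isCont P t" if "t > 0" for t
    using Y[OF that] unfolding P_def by (auto intro!: continuous_intros)
  have nonneg: "P t \<ge> 0" if "t > 0" for t
  proof -
    have "t^(2*n) = t^n * t^n"
      by (simp add: mult_2 power_add)
    then have "sqrt (1 + t^(2*n)) \<le> 1 + t^n"
      using that by (intro real_le_lsqrt) (simp_all add: power2_eq_square algebra_simps)
    then have "t^(n-1) / (1 + t^n) \<le> t^(n-1) / sqrt (1 + t^(2*n))"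
      using that Y[OF that] by (intro divide_left_mono mult_pos_pos) (simp_all add: add_pos_nonneg)
    then show ?thesis
      unfolding P_def by simp
  qed
  have lim_0: "(F \<longlongrightarrow> 0) (at_right 0)"
    unfolding F_def using n by (auto intro!: tendsto_eq_intros simp: power_0_left)
  have lim_infty: "(F \<longlongrightarrow> ln 2 / n) at_top"
    unfolding F_def using n tendsto_arsinh_power_minus_ln_1_plus_power[OF n]
    by (intro tendsto_intros) auto
  show "set_integrable lborel {0<..} P" "(LINT t:{0<..}|lborel. P t) = ln 2 / n"
    using set_integral_0_infty_FTC_nonneg[OF deriv cont nonneg lim_0 lim_infty] by simp_all
qed

lemma abs_inverse_minus_power_div_le:
  fixes n :: nat and t :: real
  assumes n: "n \<ge> 1" and t: "t > 0"
  shows "\<bar>1 / (1 + t) - t^(n-1) / (1 + t^n)\<bar> \<le> 2 / (1 + t)^2"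
proof -
  define v where "v = t^(n-1)"
  have tn: "t^n = t * v"
    unfolding v_def using n by (simp add: power_eq_if)
  have v: "v \<ge> 0" "t * v \<ge> 0"
    using t by (simp_all add: v_def)
  have key: "\<bar>1 - v\<bar> * (1 + t) \<le> 2 * (1 + t * v)"
  proof (cases "t \<le> 1")
    case True
    then have "v \<le> 1"
      unfolding v_def using t by (simp add: power_le_one)
    then have "\<bar>1 - v\<bar> * (1 + t) = 1 + t - v - t * v"
      by (simp add: algebra_simps)
    then show ?thesis
      using True v by argo
  next
    case False
    then have "1 \<le> v" "v \<le> t * v"
      using v mult_right_mono[of 1 t v] unfolding v_def by simp_all
    moreover from \<open>1 \<le> v\<close> have "\<bar>1 - v\<bar> * (1 + t) = v + t * v - 1 - t"
      by (simp add: algebra_simps)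
    ultimately show ?thesis
      using False by argo
  qed
  have pos: "1 + t > 0" "1 + t * v > 0"
    using t v(2) by linarith+
  have "1 / (1 + t) - t^(n-1) / (1 + t^n) = (1 - v) / ((1 + t) * (1 + t * v))"
    unfolding v_def[symmetric] tn using pos by (simp add: field_simps)
  then have "\<bar>1 / (1 + t) - t^(n-1) / (1 + t^n)\<bar> = \<bar>1 - v\<bar> / ((1 + t) * (1 + t * v))"
    using pos by (simp add: abs_div abs_mult)
  also have "\<dots> \<le> 2 / (1 + t)^2"
    using key pos by (simp add: divide_simps power2_eq_square)
  finally show ?thesis .
qed

lemma tendsto_ln_1_plus_minus_ln_1_plus_power:
  fixes n :: nat
  assumes n: "n \<ge> 1"
  shows "((\<lambda>t::real. ln (1 + t) - ln (1 + t^n) / n) \<longlongrightarrow> 0) at_top"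
proof -
  have ln_1_plus: "ln (1 + x) = ln x + ln (1 + inverse x)" if "x > 0" for x :: real
  proof -
    have "1 + x = x * (1 + inverse x)" "1 + inverse x > 0"
      using that by (simp_all add: field_simps add_pos_pos)
    then show ?thesis
      using that by (simp add: ln_mult)
  qed
  have "ln (1 + inverse t) - ln (1 + inverse t ^ n) / n = ln (1 + t) - ln (1 + t^n) / n"
    if "t > 0" for t :: real
    using that n ln_1_plus[of t] ln_1_plus[of "t^n"] by (simp add: ln_realpow field_simps)
  then have ev: "\<forall>\<^sub>F t in at_top. ln (1 + inverse t) - ln (1 + inverse t ^ n) / n
                                  = ln (1 + t) - ln (1 + t^n) / n"
    by (intro eventually_at_top_linorderI[of 1]) auto
  have "((\<lambda>t::real. ln (1 + inverse t) - ln (1 + inverse t ^ n) / n)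
           \<longlongrightarrow> ln (1 + 0) - ln (1 + 0 ^ n) / n) at_top"
    using n by (intro tendsto_intros tendsto_inverse_0_at_top filterlim_ident)
               (auto simp: power_0_left)
  then have "((\<lambda>t::real. ln (1 + inverse t) - ln (1 + inverse t ^ n) / n) \<longlongrightarrow> 0) at_top"
    using n by (simp add: power_0_left)
  from this ev show ?thesis
    by (rule Lim_transform_eventually)
qed

lemma set_integral_inverse_minus_power_div:
  fixes n :: nat
  assumes n: "n \<ge> 1"
  defines "Q \<equiv> \<lambda>t::real. 1 / (1 + t) - t^(n-1) / (1 + t^n)"
  shows "set_integrable lborel {0<..} Q" and "(LINT t:{0<..}|lborel. Q t) = 0"
proof -
  have Y: "1 + t^n > 0" if "t > 0" for t :: real
    using that by (simp add: add_pos_nonneg)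
  have cont: "isCont Q t" if "t > 0" for t :: real
    using that Y[OF that] unfolding Q_def by (auto intro!: continuous_intros)
  have "set_integrable lborel {0<..} (\<lambda>t::real. 2 / (1 + t)^2)"
  proof (rule set_integral_0_infty_FTC_nonneg)
    show "((\<lambda>t. - 2 / (1 + t)) has_real_derivative 2 / (1 + t)^2) (at t)" if "t > 0" for t :: real
      using that by (auto intro!: derivative_eq_intros simp: power2_eq_square field_simps)
    show "((\<lambda>t::real. - 2 / (1 + t)) \<longlongrightarrow> -2) (at_right 0)"
      by (auto intro!: tendsto_eq_intros)
    show "((\<lambda>t::real. - 2 / (1 + t)) \<longlongrightarrow> 0) at_top"
      by real_asymp
  qed (auto intro!: continuous_intros)
  then show int: "set_integrable lborel {0<..} Q"
    using cont abs_inverse_minus_power_div_le[OF n] unfolding Q_def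
    by (rule set_integrable_0_infty_bound)
  define R where "R = (\<lambda>t::real. ln (1 + t) - ln (1 + t^n) / n)"
  have deriv: "(R has_real_derivative Q t) (at t)" if "t > 0" for t :: real
  proof -
    have "(R has_real_derivative 1 / (1 + t) - n * t^(n-1) / (1 + t^n) / n) (at t)"
      unfolding R_def using that Y[OF that] by (auto intro!: derivative_eq_intros)
    then show ?thesis
      by (rule DERIV_cong) (use n in \<open>simp add: Q_def\<close>)
  qed
  have lim_0: "(R \<longlongrightarrow> 0) (at_right 0)"
    unfolding R_def using n by (auto intro!: tendsto_eq_intros simp: power_0_left)
  show "(LINT t:{0<..}|lborel. Q t) = 0"
    using set_integral_0_infty_FTC[OF deriv cont int lim_0
            tendsto_ln_1_plus_minus_ln_1_plus_power[OF n, folded R_def]]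
    by simp
qed

lemma set_integral_power_div_sqrt_minus_inverse:
  fixes n :: nat
  assumes n: "n \<ge> 1"
  shows "set_integrable lborel {0<..} (\<lambda>t::real. t^(n-1) / sqrt (1 + t^(2*n)) - 1 / (1 + t))"
    and "(LINT t:{0<..}|lborel. t^(n-1) / sqrt (1 + t^(2*n)) - 1 / (1 + t)) = ln 2 / n"
proof -
  note P = set_integral_power_div_sqrt_minus_power_div[OF n] and Q = set_integral_inverse_minus_power_div[OF n]
  have eq: "t^(n-1) / sqrt (1 + t^(2*n)) - 1 / (1 + t)
              = (t^(n-1) / sqrt (1 + t^(2*n)) - t^(n-1) / (1 + t^n))
                - (1 / (1 + t) - t^(n-1) / (1 + t^n))" for t :: real
    by simp
  show "set_integrable lborel {0<..} (\<lambda>t::real. t^(n-1) / sqrt (1 + t^(2*n)) - 1 / (1 + t))"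
    unfolding eq by (rule set_integral_diff(1)[OF P(1) Q(1)])
  show "(LINT t:{0<..}|lborel. t^(n-1) / sqrt (1 + t^(2*n)) - 1 / (1 + t)) = ln 2 / n"
    unfolding eq using set_integral_diff(2)[OF P(1) Q(1)] P(2) Q(2) by simp
qed

lemma set_integral_powr_ratio_minus_inverse_step:
  fixes m a I :: real
  assumes m: "m > 0" and a: "a > 0"
    and int: "set_integrable lborel {0<..} (\<lambda>t. t powr (m*a - 1) / (1 + t powr m) powr a - 1 / (1 + t))"
    and val: "(LINT t:{0<..}|lborel. t powr (m*a - 1) / (1 + t powr m) powr a - 1 / (1 + t)) = I"
  shows "set_integrable lborel {0<..}
           (\<lambda>t. t powr (m*(a + 1) - 1) / (1 + t powr m) powr (a + 1) - 1 / (1 + t))"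
    and "(LINT t:{0<..}|lborel. t powr (m*(a + 1) - 1) / (1 + t powr m) powr (a + 1) - 1 / (1 + t))
           = I - 1 / (m*a)"
proof -
  define g where "g = (\<lambda>t::real. t powr (m*a - 1) / (1 + t powr m) powr (a + 1))"
  have g: "set_integrable lborel {0<..} g" "(LINT t:{0<..}|lborel. g t) = 1 / (m*a)"
    using set_integral_Beta_0_infty[OF m a zero_less_one] a
    by (simp_all add: g_def Beta_right_1)
  have eq: "t powr (m*(a + 1) - 1) / (1 + t powr m) powr (a + 1) - 1 / (1 + t)
              = (t powr (m*a - 1) / (1 + t powr m) powr a - 1 / (1 + t)) - g t" if "t > 0" for t
  proof -
    define Y where "Y = 1 + t powr m"
    have Y: "Y > 0"
      by (simp add: Y_def add_pos_nonneg)
    have num: "t powr (m*(a + 1) - 1) = t powr (m*a - 1) * (Y - 1)"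
      by (simp add: Y_def powr_add[symmetric] algebra_simps)
    have den: "Y powr (a + 1) = Y powr a * Y"
      using Y by (simp add: powr_add)
    show ?thesis
      unfolding g_def Y_def[symmetric] num den using Y by (simp add: field_simps)
  qed
  have "set_integrable lborel {0<..}
          (\<lambda>t. (t powr (m*a - 1) / (1 + t powr m) powr a - 1 / (1 + t)) - g t)"
    using int g(1) by (rule set_integral_diff)
  then show "set_integrable lborel {0<..}
               (\<lambda>t. t powr (m*(a + 1) - 1) / (1 + t powr m) powr (a + 1) - 1 / (1 + t))"
    by (rule set_integrable_cong[THEN iffD1, rotated 3]) (simp_all add: eq)
  have "(LINT t:{0<..}|lborel. t powr (m*(a + 1) - 1) / (1 + t powr m) powr (a + 1) - 1 / (1 + t))
          = (LINT t:{0<..}|lborel. (t powr (m*a - 1) / (1 + t powr m) powr a - 1 / (1 + t)) - g t)"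
    by (rule set_lebesgue_integral_cong) (simp_all add: eq)
  also have "\<dots> = I - 1 / (m*a)"
    using set_integral_diff(2)[OF int g(1)] val g(2) by simp
  finally show "(LINT t:{0<..}|lborel. t powr (m*(a + 1) - 1) / (1 + t powr m) powr (a + 1) - 1 / (1 + t))
                  = I - 1 / (m*a)" .
qed

lemma set_integral_powr_ratio_minus_inverse_half_integer:
  fixes n k :: nat
  assumes n: "n \<ge> 1" and k: "k \<ge> 1"
  shows "set_integrable lborel {0<..}
           (\<lambda>t. t powr (2*n*(real k - 1/2) - 1) / (1 + t powr (2*n)) powr (real k - 1/2) - 1 / (1 + t))"
    and "(LINT t:{0<..}|lborel. t powr (2*n*(real k - 1/2) - 1) / (1 + t powr (2*n)) powr (real k - 1/2) - 1 / (1 + t))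
           = (ln 2 - (\<Sum>i<k - 1. 1 / (2 * real i + 1))) / n"
proof -
  define \<psi> where "\<psi> = (\<lambda>a t::real. t powr (2 * real n * a - 1) / (1 + t powr (2 * real n)) powr a - 1 / (1 + t))"
  have "set_integrable lborel {0<..} (\<psi> (real k - 1/2))
        \<and> (LINT t:{0<..}|lborel. \<psi> (real k - 1/2) t) = (ln 2 - (\<Sum>i<k - 1. 1 / (2 * real i + 1))) / n"
    using k
  proof (induction k rule: nat_induct_at_least)
    case base
    note base = set_integral_power_div_sqrt_minus_inverse[OF n]
    have eq: "\<psi> (1/2) t = t^(n-1) / sqrt (1 + t^(2*n)) - 1 / (1 + t)" if "t > 0" for t
    proof -
      have "t powr (2 * real n * (1/2) - 1) = t^(n-1)"
        using that n by (simp add: powr_realpow[symmetric])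
      moreover have "(1 + t powr (2 * real n)) powr (1/2) = sqrt (1 + t^(2*n))"
        using that by (simp add: powr_half_sqrt add_pos_nonneg powr_realpow[symmetric])
      ultimately show ?thesis
        by (simp add: \<psi>_def)
    qed
    have "set_integrable lborel {0<..} (\<psi> (1/2))"
      using base(1) by (rule set_integrable_cong[THEN iffD1, rotated 3]) (simp_all add: eq)
    moreover have "(LINT t:{0<..}|lborel. \<psi> (1/2) t)
                     = (LINT t:{0<..}|lborel. t^(n-1) / sqrt (1 + t^(2*n)) - 1 / (1 + t))"
      by (rule set_lebesgue_integral_cong) (simp_all add: eq)
    ultimately show ?case
      using base(2) by simp
  next
    case (Suc k)
    define a where "a = real k - 1/2"
    have a: "a > 0" "real (Suc k) - 1/2 = a + 1"
      using Suc.hyps by (simp_all add: a_def)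
    have m: "2 * real n > 0"
      using n by simp
    note step = set_integral_powr_ratio_minus_inverse_step[OF m a(1),
        OF Suc.IH[THEN conjunct1, folded a_def, unfolded \<psi>_def]
           Suc.IH[THEN conjunct2, folded a_def, unfolded \<psi>_def]]
    have "(\<Sum>i<Suc k - 1. 1 / (2 * real i + 1)) = (\<Sum>i<k - 1. 1 / (2 * real i + 1)) + 1 / (2 * real k - 1)"
      using Suc.hyps by (cases k) (simp_all add: algebra_simps)
    then have "(ln 2 - (\<Sum>i<k - 1. 1 / (2 * real i + 1))) / n - 1 / (2 * real n * a)
                 = (ln 2 - (\<Sum>i<Suc k - 1. 1 / (2 * real i + 1))) / n"
      using n by (simp add: a_def field_simps)
    moreover have "set_integrable lborel {0<..} (\<psi> (a + 1))"
      unfolding \<psi>_def by (rule step(1))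
    moreover have "(LINT t:{0<..}|lborel. \<psi> (a + 1) t)
                     = (ln 2 - (\<Sum>i<k - 1. 1 / (2 * real i + 1))) / n - 1 / (2 * real n * a)"
      unfolding \<psi>_def by (rule step(2))
    ultimately show ?case
      unfolding a(2) by simp
  qed
  then show "set_integrable lborel {0<..}
               (\<lambda>t. t powr (2*n*(real k - 1/2) - 1) / (1 + t powr (2*n)) powr (real k - 1/2) - 1 / (1 + t))"
    and "(LINT t:{0<..}|lborel. t powr (2*n*(real k - 1/2) - 1) / (1 + t powr (2*n)) powr (real k - 1/2) - 1 / (1 + t))
           = (ln 2 - (\<Sum>i<k - 1. 1 / (2 * real i + 1))) / n"
    by (simp_all add: \<psi>_def)
qed

lemma has_integral_K_interior:
  fixes m k j :: nat
  assumes m: "m \<ge> 1" and k: "k \<ge> 1" and j: "j \<ge> 1" "2 * j \<le> m + 1"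
  shows "((\<lambda>t::real. t powr (real (m * k) - real j) / (1 + t ^ m) powr (real k - 1/2)
                        - t powr (real m / 2 - real j))
           has_integral
           (- (2 * real k - 1) / (real m + 2 - 2 * real j)
              * Beta (real k - (real j - 1) / real m) (1/2 + (real j - 1) / real m)))
         {0<..}"
proof -
  define a where "a = real k - (real j - 1) / m"
  define c where "c = real k - 1/2"
  have m_pos: "real m > 0"
    using m by simp
  have ac: "0 \<le> c" "c < a" "a < c + 1"
    using k j m_pos by (simp_all add: a_def c_def field_simps)
  note K = set_integral_powr_ratio_minus_powr[OF m_pos ac]
  have "real m * a - 1 = real (m * k) - real j" "real m * (a - c) - 1 = real m / 2 - real j"
    using m_pos by (simp_all add: a_def c_def field_simps)
  then have integrand: "t powr (real m * a - 1) / (1 + t powr real m) powr c - t powr (real m * (a - c) - 1)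
      = t powr (real (m * k) - real j) / (1 + t ^ m) powr (real k - 1/2) - t powr (real m / 2 - real j)"
    if "t > 0" for t :: real
    using that by (simp add: c_def powr_realpow)
  have d: "real m * (a - c) = (real m + 2 - 2 * real j) / 2"
    using m_pos by (simp add: a_def c_def field_simps)
  have "real m + 2 - 2 * real j > 0"
    using j by simp
  then have coeff: "- c / (real m * (a - c)) = - (2 * real k - 1) / (real m + 2 - 2 * real j)"
    unfolding d by (simp add: c_def field_simps)
  have b: "c + 1 - a = 1/2 + (real j - 1) / real m"
    by (simp add: a_def c_def)
  have val: "- c / (real m * (a - c)) * Beta a (c + 1 - a)
      = - (2 * real k - 1) / (real m + 2 - 2 * real j)
          * Beta (real k - (real j - 1) / real m) (1/2 + (real j - 1) / real m)"
    unfolding coeff b by (simp add: a_def)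
  from has_integral_set_borel_integral[OF K(1)] show ?thesis
    unfolding K(2) val by (rule has_integral_cong[THEN iffD1, rotated]) (simp add: integrand)
qed

lemma has_integral_K_boundary:
  fixes m k :: nat
  assumes m: "even m" "m \<ge> 2" and k: "k \<ge> 1"
  shows "((\<lambda>t::real. t powr (real (m * k) - real m / 2 - 1) / (1 + t ^ m) powr (real k - 1/2)
                        - 1 / (t + 1))
           has_integral (2 / real m * (ln 2 - (\<Sum>i<k - 1. 1 / (2 * real i + 1))))) {0<..}"
proof -
  obtain n where n: "m = 2 * n"
    using m(1) by blast
  then have "n \<ge> 1"
    using m(2) by simp
  note K = set_integral_powr_ratio_minus_inverse_half_integer[OF this k]
  have "2 * real n * (real k - 1/2) - 1 = real (m * k) - real m / 2 - 1"
    by (simp add: n algebra_simps)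
  then have integrand: "t powr (2 * real n * (real k - 1/2) - 1) / (1 + t powr (2 * real n)) powr (real k - 1/2)
                          - 1 / (1 + t)
      = t powr (real (m * k) - real m / 2 - 1) / (1 + t ^ m) powr (real k - 1/2) - 1 / (t + 1)"
    if "t > 0" for t :: real
    using that by (simp add: n powr_realpow[symmetric] add.commute)
  have val: "(ln 2 - (\<Sum>i<k - 1. 1 / (2 * real i + 1))) / n
                 = 2 / real m * (ln 2 - (\<Sum>i<k - 1. 1 / (2 * real i + 1)))"
    by (simp add: n)
  from has_integral_set_borel_integral[OF K(1)] show ?thesis
    unfolding K(2) val by (rule has_integral_cong[THEN iffD1, rotated]) (simp add: integrand)
qed

theorem theoremA2:
  fixes m k j :: nat
  assumes "m \<ge> 3" and "1 \<le> k" and "k \<le> j" and "2 * j \<le> m + 2"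
  shows "(2 * j \<le> m + 1 \<longrightarrow>
            ((\<lambda>t::real. t powr (real (m * k) - real j) / (1 + t ^ m) powr (real k - 1/2)
                          - t powr (real m / 2 - real j))
              has_integral
              (if j = 1 \<and> k = 1 then - 2 / real m
               else - (2 * real k - 1) / (real m + 2 - 2 * real j)
                      * Beta (real k - (real j - 1) / real m) (1/2 + (real j - 1) / real m)))
            {0<..})
       \<and> (even m \<and> 2 * j = m + 2 \<longrightarrow>
            ((\<lambda>t::real. t powr (real (m * k) - real m / 2 - 1) / (1 + t ^ m) powr (real k - 1/2)
                          - 1 / (t + 1))
              has_integral
              (2 / real m * (ln 2 - (\<Sum>i<k - 1. 1 / (2 * real i + 1)))))
            {0<..})"
  using assms has_integral_K_interior[of m k j] has_integral_K_boundary[of m k]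
  by (auto simp: Beta_1_one_half)

end
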